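(* Let $G$ be a compact abelian group with discrete dual group $\Gamma$, let $N \in \mathbb{N}$ and $E \subset \Gamma$. If $E$ is independent and $\mathbb{Z}_N \subset \operatorname{range}(\gamma)$ for all $\gamma \in E$, then $E$ is $N$-PR.
   Context: Characters are written multiplicatively; $\mathbb{Z}_N$ is identified with the $N$-th roots of unity in the unit circle $\mathbb{T}$, and $\operatorname{range}(\gamma) = \gamma(G)$. A set $E$ of characters is independent if whenever $\gamma_1,\dots,\gamma_k \in E$ are distinct, $m_i \in \mathbb{Z}$ and $\prod_i \gamma_i^{m_i} = 1$, then $\gamma_i^{m_i} = 1$ for all $i$. A subset $E \subset \Gamma$ is $N$-PR if for every function $\varphi: E \to \mathbb{Z}_N$ there exists $x \in G$ with $\varphi(\gamma) = \gamma(x)$ for all $\gamma \in E$. *)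

theory Defs
  imports "HOL-Analysis.Analysis"
begin

definition character :: "('g::{topological_group_add, ab_group_add} \<Rightarrow> complex) \<Rightarrow> bool" where
  "character \<gamma> \<longleftrightarrow> continuous_on UNIV \<gamma> \<and> (\<forall>x y. \<gamma> (x + y) = \<gamma> x * \<gamma> y)
      \<and> (\<forall>x. norm (\<gamma> x) = 1)"

definition independent_chars :: "('g::{topological_group_add, ab_group_add} \<Rightarrow> complex) set \<Rightarrow> bool" where
  "independent_chars E \<longleftrightarrow>
     (\<forall>F m. finite F \<and> F \<subseteq> E \<and> (\<forall>x. (\<Prod>\<gamma>\<in>F. (\<gamma> x) powi (m \<gamma>)) = 1)
        \<longrightarrow> (\<forall>\<gamma>\<in>F. \<forall>x. (\<gamma> x) powi (m \<gamma>) = 1))"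

text \<open>Z_N identified with the N-th roots of unity.\<close>
definition roots_unity :: "nat \<Rightarrow> complex set" where
  "roots_unity N = {z. z ^ N = 1}"

definition N_PR :: "nat \<Rightarrow> ('g::{topological_group_add, ab_group_add} \<Rightarrow> complex) set \<Rightarrow> bool" where
  "N_PR N E \<longleftrightarrow> (\<forall>\<phi>. (\<forall>\<gamma>\<in>E. \<phi> \<gamma> \<in> roots_unity N) \<longrightarrow> (\<exists>x. \<forall>\<gamma>\<in>E. \<phi> \<gamma> = \<gamma> x))"

end

theory Submission
  imports Defs
begin

text \<open>
  It suffices that for independent characters any targets \<open>t \<gamma> \<in> range \<gamma>\<close> are attained
  simultaneously. By compactness (finite intersection property of the closed sets
  \<open>{x. \<gamma> x = t \<gamma>}\<close>) only finitely many characters matter, and these are added one at a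
  time: once the targets are met on \<open>F\<close>, one needs that \<open>\<beta>\<close> restricted to the common kernel
  \<open>K\<close> of \<open>F\<close> still has the full range of \<open>\<beta>\<close>. Now \<open>\<beta> ` K\<close> is a closed subgroup of the
  circle, hence the whole circle or the \<open>n\<close>-th roots of unity. In the second case \<open>\<beta>\<^sup>n\<close> is
  trivial on \<open>K\<close>, so by a finite instance of Pontryagin duality it is a product of powers of
  the characters in \<open>F\<close>; independence then forces \<open>\<beta>\<^sup>n = 1\<close>, i.e. \<open>range \<beta> \<subseteq> \<beta> ` K\<close>.
  The duality step rests on the classification of continuous homomorphisms from a closed
  subgroup of the circle to the circle as the maps \<open>z \<mapsto> z powi a\<close>.
\<close>

section \<open>Closed subgroups of the real line\<close>

definition add_subgroup :: "'a::ab_group_add set \<Rightarrow> bool" where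
  "add_subgroup H \<longleftrightarrow> 0 \<in> H \<and> (\<forall>x\<in>H. \<forall>y\<in>H. x + y \<in> H) \<and> (\<forall>x\<in>H. - x \<in> H)"

lemma add_subgroup_of_int_mult:
  fixes H :: "'a::ring_1 set"
  assumes H: "add_subgroup H" and t: "t \<in> H"
  shows "of_int k * t \<in> H"
proof -
  have nat_mult: "of_nat n * t \<in> H" for n
    using H t by (induction n) (auto simp: add_subgroup_def distrib_right)
  show ?thesis
  proof (cases "k \<ge> 0")
    case True
    then show ?thesis using nat_mult[of "nat k"] by simp
  next
    case False
    then have "of_int (- k) * t \<in> H" using nat_mult[of "nat (- k)"] by simp
    with H show ?thesis unfolding add_subgroup_def by (metis minus_minus mult_minus_left of_int_minus)
  qed
qed

lemma closed_real_add_subgroup_eq_UNIV: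
  fixes H :: "real set"
  assumes closed: "closed H" and H: "add_subgroup H" and small: "\<forall>e>0. \<exists>t\<in>H. 0 < t \<and> t < e"
  shows "H = UNIV"
proof -
  have "\<exists>y\<in>H. dist y r < e" if "e > 0" for r e
  proof -
    obtain t where t: "t \<in> H" "0 < t" "t < e" using small \<open>e > 0\<close> by blast
    define k where "k = \<lfloor>r / t\<rfloor>"
    have "of_int k \<le> r / t" "r / t < of_int k + 1" unfolding k_def by linarith+
    then have "of_int k * t \<le> r" "r < of_int k * t + t" using t(2) by (auto simp: field_simps)
    then have "dist (of_int k * t) r < e" using t by (simp add: dist_real_def)
    then show ?thesis using add_subgroup_of_int_mult[OF H t(1)] by blast
  qed
  then show ?thesis using closed_approachable[OF closed] by blast
qed

lemma closed_real_add_subgroup_with_gap: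
  fixes H :: "real set"
  assumes closed: "closed H" and H: "add_subgroup H" and p: "p \<in> H" "p \<noteq> 0"
    and e: "e > 0" and gap: "\<And>t. t \<in> H \<Longrightarrow> \<not> (0 < t \<and> t < e)"
  shows "\<exists>c>0. H = range (\<lambda>k::int. of_int k * c)"
proof -
  define P where "P = H \<inter> {e..}"
  have "\<bar>p\<bar> \<in> P"
    using p gap[of "\<bar>p\<bar>"] H unfolding P_def add_subgroup_def by (cases "p \<ge> 0") auto
  moreover have bdd: "bdd_below P" unfolding P_def by (rule bdd_belowI[of _ e]) auto
  moreover have "closed P" unfolding P_def by (intro closed_Int closed closed_atLeast)
  ultimately have "Inf P \<in> P" using closed_contains_Inf by blast
  define c where "c = Inf P"
  have c: "c \<in> H" "c \<ge> e" using \<open>Inf P \<in> P\<close> unfolding c_def P_def by auto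
  have "t \<in> range (\<lambda>k::int. of_int k * c)" if t: "t \<in> H" for t
  proof -
    define k where "k = \<lfloor>t / c\<rfloor>"
    have "of_int (- k) * c \<in> H" by (rule add_subgroup_of_int_mult[OF H c(1)])
    then have rem: "t - of_int k * c \<in> H" using H t unfolding add_subgroup_def by force
    have "of_int k \<le> t / c" "t / c < of_int k + 1" unfolding k_def by linarith+
    then have bounds: "of_int k * c \<le> t" "t < of_int k * c + c" using c e by (auto simp: field_simps)
    have "t - of_int k * c = 0"
    proof (rule ccontr)
      assume "t - of_int k * c \<noteq> 0"
      then have "t - of_int k * c \<in> P" using bounds gap[OF rem] rem unfolding P_def by auto
      then have "c \<le> t - of_int k * c" unfolding c_def by (rule cInf_lower[OF _ bdd])
      then show False using bounds by simp
    qed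
    then show ?thesis by auto
  qed
  moreover have "range (\<lambda>k::int. of_int k * c) \<subseteq> H" using add_subgroup_of_int_mult[OF H c(1)] by auto
  ultimately show ?thesis using c e by (intro exI[of _ c]) auto
qed

lemma closed_real_add_subgroup_cases:
  fixes H :: "real set"
  assumes "closed H" "add_subgroup H" "p \<in> H" "p \<noteq> 0"
  shows "H = UNIV \<or> (\<exists>c>0. H = range (\<lambda>k::int. of_int k * c))"
  using closed_real_add_subgroup_eq_UNIV[OF assms(1,2)] closed_real_add_subgroup_with_gap[OF assms]
  by blast

lemma continuous_additive_eq_scaleR:
  fixes u :: "real \<Rightarrow> 'a::real_normed_vector"
  assumes cont: "continuous_on UNIV u" and add: "\<And>s t. u (s + t) = u s + u t"
  shows "u t = t *\<^sub>R u 1"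
proof -
  define H where "H = {t. u t = t *\<^sub>R u 1}"
  have u_0: "u 0 = 0" using add[of 0 0] by simp
  have u_minus: "u (- t) = - u t" for t using add[of t "- t"] u_0 by (simp add: eq_neg_iff_add_eq_0 add.commute)
  have "add_subgroup H"
    by (auto simp: add_subgroup_def H_def u_0 u_minus add scaleR_add_left)
  moreover have "closed H"
    unfolding H_def by (intro closed_Collect_eq cont continuous_intros)
  moreover have half: "t / 2 \<in> H" if "t \<in> H" for t
  proof -
    have "2 *\<^sub>R u (t / 2) = t *\<^sub>R u 1" using that add[of "t/2" "t/2"] by (simp add: H_def scaleR_2)
    then have "(1/2) *\<^sub>R (2 *\<^sub>R u (t / 2)) = (1/2) *\<^sub>R (t *\<^sub>R u 1)" by simp
    then show ?thesis unfolding H_def by simp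
  qed
  ultimately have "H = UNIV \<or> (\<exists>c>0. H = range (\<lambda>k::int. of_int k * c))"
    by (intro closed_real_add_subgroup_cases[of H 1]) (auto simp: H_def)
  txt \<open>A cyclic group is not closed under halving.\<close>
  moreover have "H \<noteq> range (\<lambda>k::int. of_int k * c)" if "c > 0" for c
  proof
    assume Hc: "H = range (\<lambda>k::int. of_int k * c)"
    then have "c \<in> H" by (metis mult_1 of_int_1 rangeI)
    then have "c / 2 \<in> H" by (rule half)
    then obtain k :: int where "c / 2 = of_int k * c" using Hc by auto
    then have "of_int (2 * k) = (1::real)" using \<open>c > 0\<close> by (simp add: field_simps)
    then show False by presburger
  qed
  ultimately show ?thesis unfolding H_def by auto
qed

section \<open>Continuous homomorphisms into the circle\<close>

lemma exp_eq_1_iff_int: "exp z = 1 \<longleftrightarrow> (\<exists>n::int. z = of_int n * (2 * pi * \<i>))"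
  using exp_eq[of z 0] by (auto simp: algebra_simps)

lemma continuous_exp_eq_1_imp_constant:
  fixes d :: "'a::topological_space \<Rightarrow> complex"
  assumes "connected S" "continuous_on S d" and exp_d: "\<And>t. t \<in> S \<Longrightarrow> exp (d t) = 1"
  shows "d constant_on S"
proof (rule continuous_discrete_range_constant[OF assms(1,2)])
  fix s assume "s \<in> S"
  have "2 * pi \<le> norm (d t - d s)" if "t \<in> S" "d t \<noteq> d s" for t
  proof -
    obtain n m :: int where "d t = of_int n * (2 * pi * \<i>)" "d s = of_int m * (2 * pi * \<i>)"
      using exp_d \<open>s \<in> S\<close> \<open>t \<in> S\<close> by (meson exp_eq_1_iff_int)
    moreover from this have "n \<noteq> m" using that by auto
    ultimately have "d t - d s = of_int (n - m) * (2 * pi * \<i>)" by (simp add: algebra_simps)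
    then have "norm (d t - d s) = \<bar>of_int (n - m)\<bar> * (2 * pi)"
      by (simp only: norm_mult norm_of_int) simp
    then show ?thesis using \<open>n \<noteq> m\<close> by simp
  qed
  then show "\<exists>e>0. \<forall>t. t \<in> S \<and> d t \<noteq> d s \<longrightarrow> e \<le> norm (d t - d s)"
    by (intro exI[of _ "2 * pi"]) auto
qed

lemma continuous_hom_real_eq_cis:
  fixes f :: "real \<Rightarrow> complex"
  assumes cont: "continuous_on UNIV f" and mult: "\<And>s t. f (s + t) = f s * f t"
    and nonzero: "\<And>t. f t \<noteq> 0" and period: "f (2 * pi) = 1"
  shows "\<exists>a::int. \<forall>t. f t = cis (of_int a * t)"
proof -
  obtain g where g_cont: "continuous_on UNIV g" and f_exp: "\<And>t. f t = exp (g t)"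
    by (rule continuous_logarithm_on_simply_connected[OF cont convex_imp_simply_connected[OF convex_UNIV]
        locally_path_connected_UNIV nonzero]) auto
  have g_add: "g (s + t) = g s + g t - g 0" for s t
  proof -
    define d where "d t = g (s + t) - g s - g t" for t
    have "d constant_on UNIV"
    proof (rule continuous_exp_eq_1_imp_constant)
      show "continuous_on UNIV d"
        unfolding d_def by (intro continuous_intros continuous_on_compose2[OF g_cont]) auto
      show "exp (d t) = 1" for t
        using mult[of s t] nonzero[of s] nonzero[of t] unfolding d_def f_exp by (simp add: exp_diff)
    qed simp
    then have "d t = d 0" by (metis UNIV_I constant_on_def)
    then show ?thesis unfolding d_def by (simp add: algebra_simps)
  qed
  define u where "u t = g t - g 0" for t
  have "continuous_on UNIV u" unfolding u_def by (intro continuous_intros g_cont)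
  moreover have "u (s + t) = u s + u t" for s t unfolding u_def g_add by simp
  ultimately have u_lin: "u t = of_real t * u 1" for t
    using continuous_additive_eq_scaleR[of u t] by (simp add: scaleR_conv_of_real)
  have "f 0 = 1" using mult[of 0 0] nonzero[of 0] by simp
  then have f_u: "f t = exp (u t)" for t using f_exp[of 0] unfolding u_def f_exp by (simp add: exp_diff)
  then have "exp (of_real (2 * pi) * u 1) = 1" using period u_lin[of "2 * pi"] by simp
  then obtain a :: int where "of_real (2 * pi) * u 1 = of_int a * (2 * pi * \<i>)"
    using exp_eq_1_iff_int by blast
  then have "u 1 = of_int a * \<i>" by (simp add: field_simps)
  then have "f t = cis (of_int a * t)" for t unfolding f_u u_lin[of t] by (simp add: cis_conv_exp mult_ac)
  then show ?thesis by blast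
qed

section \<open>Closed subgroups of the circle\<close>

definition circle_subgroup :: "complex set \<Rightarrow> bool" where
  "circle_subgroup S \<longleftrightarrow>
     S \<subseteq> sphere 0 1 \<and> 1 \<in> S \<and> (\<forall>x\<in>S. \<forall>y\<in>S. x * y \<in> S) \<and> (\<forall>x\<in>S. inverse x \<in> S)"

lemma roots_unity_eq_range_power:
  assumes "n > 0"
  shows "roots_unity n = range (\<lambda>j. cis (2 * pi / n) ^ j)"
proof
  have "exp (2 * of_real pi * \<i> * of_nat j / of_nat n) = cis (2 * pi / n) ^ j" for j
    unfolding cis_conv_exp exp_of_nat_mult[symmetric] by (simp add: field_simps)
  then show "roots_unity n \<subseteq> range (\<lambda>j. cis (2 * pi / n) ^ j)"
    using complex_roots_unity[of n] assms unfolding roots_unity_def by auto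
  have "(cis (2 * pi / n) ^ j) ^ n = 1" for j
    using assms by (simp add: Complex.DeMoivre flip: power_mult) (metis cis_multiple_2pi Ints_of_nat mult.commute)
  then show "range (\<lambda>j. cis (2 * pi / n) ^ j) \<subseteq> roots_unity n"
    unfolding roots_unity_def by auto
qed

lemma cis_Arg_norm_1: "norm z = 1 \<Longrightarrow> cis (Arg z) = z"
  using rcis_cmod_Arg[of z] by (simp add: rcis_def)

lemma circle_subgroup_eq_roots_unity:
  assumes S: "circle_subgroup S" and n: "n > 0"
    and L: "cis -` S = range (\<lambda>k::int. of_int k * (2 * pi / n))"
  shows "S = roots_unity n"
proof -
  have "s ^ n = 1" if "s \<in> S" for s
  proof -
    have "cis (Arg s) = s" using S that unfolding circle_subgroup_def by (intro cis_Arg_norm_1) auto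
    moreover have "Arg s \<in> cis -` S" using calculation that by simp
    then obtain m :: int where "Arg s = of_int m * (2 * pi / n)" using L by auto
    ultimately have "s ^ n = cis (real n * (of_int m * (2 * pi / n)))" by (metis Complex.DeMoivre)
    also have "real n * (of_int m * (2 * pi / n)) = 2 * pi * of_int m" using n by (simp add: field_simps)
    finally show ?thesis by simp
  qed
  moreover have "cis (2 * pi / n) ^ j \<in> S" for j
  proof -
    have "of_int (int j) * (2 * pi / n) \<in> cis -` S" using L by blast
    then show ?thesis by (simp add: Complex.DeMoivre)
  qed
  ultimately show ?thesis using roots_unity_eq_range_power[OF n] unfolding roots_unity_def by auto
qed

lemma closed_circle_subgroup_cases:
  assumes closed: "closed S" and S: "circle_subgroup S"
  shows "S = sphere 0 1 \<or> (\<exists>n>0. S = roots_unity n)"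
proof -
  define L where "L = cis -` S"
  have "add_subgroup L"
    using S unfolding L_def circle_subgroup_def add_subgroup_def by (auto simp flip: cis_mult)
  moreover have "closed L"
    unfolding L_def using continuous_on_cis[OF continuous_on_id, of UNIV]
    by (intro continuous_closed_vimage[OF closed]) (simp add: continuous_on_eq_continuous_at)
  moreover have L_2pi: "2 * pi \<in> L" using S unfolding L_def circle_subgroup_def by simp
  ultimately consider "L = UNIV" | c where "c > 0" "L = range (\<lambda>k::int. of_int k * c)"
    using closed_real_add_subgroup_cases[of L "2 * pi"] by force
  then show ?thesis
  proof cases
    case 1
    have "z \<in> S" if "norm z = 1" for z
    proof -
      have "cis (Arg z) = z" using that by (rule cis_Arg_norm_1)
      then show ?thesis using 1 unfolding L_def by (metis UNIV_I vimageE)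
    qed
    then show ?thesis using S unfolding circle_subgroup_def by auto
  next
    case 2
    obtain k :: int where k: "2 * pi = of_int k * c" using L_2pi 2 by auto
    then have "0 < of_int k * c" using pi_gt_zero by linarith
    then have "k > 0" using \<open>c > 0\<close> by (simp add: zero_less_mult_iff)
    then have "nat k > 0" "c = 2 * pi / nat k" using k by auto
    then show ?thesis using circle_subgroup_eq_roots_unity[OF S] 2 unfolding L_def by metis
  qed
qed

lemma continuous_circle_hom_eq_power_int:
  fixes \<psi> :: "complex \<Rightarrow> complex"
  assumes cont: "continuous_on (sphere 0 1) \<psi>"
    and mult: "\<And>x y. x \<in> sphere 0 1 \<Longrightarrow> y \<in> sphere 0 1 \<Longrightarrow> \<psi> (x * y) = \<psi> x * \<psi> y"
    and norm: "\<And>x. x \<in> sphere 0 1 \<Longrightarrow> norm (\<psi> x) = 1"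
  shows "\<exists>a::int. \<forall>s\<in>sphere 0 1. \<psi> s = s powi a"
proof -
  define f where "f t = \<psi> (cis t)" for t
  have cis_sphere: "cis t \<in> sphere 0 1" for t by simp
  have "continuous_on UNIV f"
    unfolding f_def using cis_sphere
    by (intro continuous_on_compose2[OF cont continuous_on_cis[OF continuous_on_id]]) auto
  moreover have "f (s + t) = f s * f t" for s t
    unfolding f_def using mult[OF cis_sphere cis_sphere] by (simp flip: cis_mult)
  moreover have "f t \<noteq> 0" for t unfolding f_def using norm[OF cis_sphere[of t]] by auto
  moreover have "f (2 * pi) = 1"
    unfolding f_def using mult[of 1 1] norm[of 1] by fastforce
  ultimately obtain a :: int where a: "\<And>t. f t = cis (of_int a * t)"
    using continuous_hom_real_eq_cis by blast
  have "\<psi> s = s powi a" if "s \<in> sphere 0 1" for s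
  proof -
    have "cis (Arg s) = s" using that by (intro cis_Arg_norm_1) simp
    then show ?thesis using a[of "Arg s"] unfolding f_def by (metis cis_power_int)
  qed
  then show ?thesis by blast
qed

lemma roots_unity_hom_eq_power:
  fixes \<psi> :: "complex \<Rightarrow> complex"
  assumes n: "n > 0" and one: "\<psi> 1 = 1"
    and mult: "\<And>x y. x \<in> roots_unity n \<Longrightarrow> y \<in> roots_unity n \<Longrightarrow> \<psi> (x * y) = \<psi> x * \<psi> y"
  shows "\<exists>a. \<forall>s\<in>roots_unity n. \<psi> s = s ^ a"
proof -
  define \<omega> where "\<omega> = cis (2 * pi / n)"
  have powers: "roots_unity n = range (\<lambda>j. \<omega> ^ j)"
    unfolding \<omega>_def by (rule roots_unity_eq_range_power[OF n])
  have in_roots: "\<omega> ^ j \<in> roots_unity n" for j using powers by auto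
  have \<psi>_power: "\<psi> (\<omega> ^ j) = \<psi> \<omega> ^ j" for j
    using one by (induction j) (simp_all add: mult[OF in_roots[of 1, simplified] in_roots])
  have "\<psi> \<omega> ^ n = 1" using \<psi>_power[of n] one in_roots[of 1] by (simp add: roots_unity_def)
  then obtain a where a: "\<psi> \<omega> = \<omega> ^ a" using powers by (auto simp: roots_unity_def)
  have "\<psi> (\<omega> ^ j) = (\<omega> ^ j) ^ a" for j
    by (simp add: \<psi>_power a flip: power_mult) (simp add: mult.commute)
  then show ?thesis unfolding powers by auto
qed

lemma continuous_circle_subgroup_hom_eq_power_int:
  assumes "closed S" "circle_subgroup S" and cont: "continuous_on S \<psi>"
    and mult: "\<And>x y. x \<in> S \<Longrightarrow> y \<in> S \<Longrightarrow> \<psi> (x * y) = \<psi> x * \<psi> y"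
    and norm: "\<And>x. x \<in> S \<Longrightarrow> norm (\<psi> x) = 1"
  shows "\<exists>a::int. \<forall>s\<in>S. \<psi> s = s powi a"
  using closed_circle_subgroup_cases[OF assms(1,2)]
proof
  assume "S = sphere 0 1"
  then show ?thesis using continuous_circle_hom_eq_power_int[of \<psi>] cont mult norm by simp
next
  assume "\<exists>n>0. S = roots_unity n"
  then obtain n where n: "n > 0" "S = roots_unity n" by blast
  then have "1 \<in> S" by (simp add: roots_unity_def)
  then have "\<psi> 1 = 1" using mult[of 1 1] norm[of 1] by fastforce
  then obtain a where "\<forall>s\<in>S. \<psi> s = s ^ a" using roots_unity_hom_eq_power[OF n(1)] mult n(2) by metis
  then have "\<forall>s\<in>S. \<psi> s = s powi int a" by (simp add: power_int_of_nat)
  then show ?thesis by blast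
qed

section \<open>Characters of a compact abelian group\<close>

context
  fixes \<gamma> :: "'g::{topological_group_add, ab_group_add} \<Rightarrow> complex"
  assumes \<gamma>: "character \<gamma>"
begin

lemma character_add: "\<gamma> (x + y) = \<gamma> x * \<gamma> y"
  using \<gamma> by (simp add: character_def)

lemma norm_character: "norm (\<gamma> x) = 1"
  using \<gamma> by (simp add: character_def)

lemma character_nonzero: "\<gamma> x \<noteq> 0"
  using norm_character[of x] by auto

lemma continuous_on_character: "continuous_on S \<gamma>"
  using \<gamma> continuous_on_subset by (auto simp: character_def)

lemma character_0: "\<gamma> 0 = 1"
  using character_add[of 0 0] character_nonzero[of 0] by simp

lemma character_minus: "\<gamma> (- x) = inverse (\<gamma> x)"
  using character_add[of x "- x"] character_0 character_nonzero[of x] by (simp add: field_simps)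

lemma character_diff: "\<gamma> (x - y) = \<gamma> x / \<gamma> y"
  using character_add[of x "- y"] by (simp add: character_minus divide_inverse)

lemma character_power_int: "character (\<lambda>x. \<gamma> x powi k)"
  unfolding character_def
  by (auto intro!: continuous_intros continuous_on_character
      simp: character_nonzero character_add power_int_mult_distrib norm_power_int norm_character)

end

lemma character_mult:
  assumes "character \<eta>" "character \<beta>"
  shows "character (\<lambda>x. \<eta> x * \<beta> x)"
  using assms unfolding character_def
  by (auto intro!: continuous_intros simp: norm_mult)

definition common_kernel :: "('g::{topological_group_add, ab_group_add} \<Rightarrow> complex) set \<Rightarrow> 'g set" where
  "common_kernel F = {x. \<forall>\<gamma>\<in>F. \<gamma> x = 1}"

lemma closed_common_kernel:
  assumes "\<forall>\<gamma>\<in>F. character \<gamma>"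
  shows "closed (common_kernel F)"
proof -
  have eq: "common_kernel F = (\<Inter>\<gamma>\<in>F. {x. \<gamma> x = 1})" by (auto simp: common_kernel_def)
  show ?thesis unfolding eq
    using assms by (intro closed_INT ballI closed_Collect_eq continuous_on_character continuous_on_const) auto
qed

lemma add_subgroup_common_kernel:
  assumes "\<forall>\<gamma>\<in>F. character \<gamma>"
  shows "add_subgroup (common_kernel F)"
  using assms by (auto simp: add_subgroup_def common_kernel_def character_0 character_add character_minus)

lemma circle_subgroup_character_image:
  assumes "character \<beta>" "add_subgroup L"
  shows "circle_subgroup (\<beta> ` L)"
  using assms unfolding circle_subgroup_def add_subgroup_def
  by (auto simp: norm_character simp flip: character_add[OF assms(1)] character_minus[OF assms(1)])
     (metis assms(1) character_0 rev_image_eqI)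

lemma compact_character_image:
  fixes L :: "'g::{topological_group_add, ab_group_add} set"
  assumes "compact (UNIV :: 'g set)" "closed L" "character \<beta>"
  shows "compact (\<beta> ` L)"
proof -
  have "compact L" using compact_Int_closed[OF assms(1,2)] by simp
  then show ?thesis by (rule compact_continuous_image[OF continuous_on_character[OF assms(3)]])
qed

lemma character_factors_continuously_through_image:
  fixes L :: "'g::{topological_group_add, ab_group_add} set"
  assumes compact: "compact (UNIV :: 'g set)" and closed: "closed L" and L: "add_subgroup L"
    and \<beta>: "character \<beta>" and \<eta>: "character \<eta>"
    and kernel: "\<And>x. x \<in> L \<Longrightarrow> \<beta> x = 1 \<Longrightarrow> \<eta> x = 1"
  shows "\<exists>\<psi>. continuous_on (\<beta> ` L) \<psi> \<and> (\<forall>x\<in>L. \<psi> (\<beta> x) = \<eta> x)"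
proof -
  have factors: "\<eta> x = \<eta> y" if "x \<in> L" "y \<in> L" "\<beta> x = \<beta> y" for x y
  proof -
    have "x - y \<in> L" using L that unfolding add_subgroup_def by (metis diff_conv_add_uminus)
    moreover have "\<beta> (x - y) = 1" using that character_diff[OF \<beta>] character_nonzero[OF \<beta>] by simp
    ultimately have "\<eta> (x - y) = 1" by (rule kernel)
    then show ?thesis by (simp add: character_diff[OF \<eta>] character_nonzero[OF \<eta>])
  qed
  define \<psi> where "\<psi> s = \<eta> (SOME x. x \<in> L \<and> \<beta> x = s)" for s
  have \<psi>: "\<psi> (\<beta> x) = \<eta> x" if "x \<in> L" for x
  proof -
    let ?y = "SOME y. y \<in> L \<and> \<beta> y = \<beta> x"
    have "?y \<in> L \<and> \<beta> ?y = \<beta> x" by (rule someI[of _ x]) (simp add: that)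
    then show ?thesis unfolding \<psi>_def using factors[of ?y x] that by simp
  qed
  txt \<open>Closed graph theorem: the graph of \<open>\<psi>\<close> is the compact set \<open>(\<beta>, \<eta>) ` L\<close>.\<close>
  have "compact ((\<lambda>x. (\<beta> x, \<eta> x)) ` L)"
    using compact_Int_closed[OF compact closed]
    by (intro compact_continuous_image continuous_on_Pair continuous_on_character \<beta> \<eta>) simp
  moreover have "(\<lambda>s. (s, \<psi> s)) ` \<beta> ` L = (\<lambda>x. (\<beta> x, \<eta> x)) ` L"
    by (auto simp: image_image \<psi>)
  ultimately have "continuous_on (\<beta> ` L) \<psi>"
    by (intro continuous_from_closed_graph[OF compact_sphere[of 0 1]])
       (auto simp: \<psi> norm_character[OF \<eta>] intro: compact_imp_closed)
  then show ?thesis using \<psi> by blast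
qed

lemma character_eq_power_int_on_subgroup:
  fixes L :: "'g::{topological_group_add, ab_group_add} set"
  assumes compact: "compact (UNIV :: 'g set)" and closed: "closed L" and L: "add_subgroup L"
    and \<beta>: "character \<beta>" and \<eta>: "character \<eta>"
    and "\<And>x. x \<in> L \<Longrightarrow> \<beta> x = 1 \<Longrightarrow> \<eta> x = 1"
  shows "\<exists>a::int. \<forall>x\<in>L. \<eta> x = \<beta> x powi a"
proof -
  obtain \<psi> where "continuous_on (\<beta> ` L) \<psi>" and \<psi>: "\<And>x. x \<in> L \<Longrightarrow> \<psi> (\<beta> x) = \<eta> x"
    using character_factors_continuously_through_image[OF assms] by blast
  moreover have "closed (\<beta> ` L)"
    by (rule compact_imp_closed[OF compact_character_image[OF compact closed \<beta>]])
  moreover have "\<psi> (s * t) = \<psi> s * \<psi> t" if st: "s \<in> \<beta> ` L" "t \<in> \<beta> ` L" for s t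
  proof -
    obtain x y where "x \<in> L" "y \<in> L" "s = \<beta> x" "t = \<beta> y" using st by blast
    moreover have "x + y \<in> L" using L calculation by (simp add: add_subgroup_def)
    ultimately show ?thesis by (simp add: \<psi> flip: character_add[OF \<beta>] character_add[OF \<eta>])
  qed
  moreover have "norm (\<psi> s) = 1" if "s \<in> \<beta> ` L" for s
    using that by (auto simp: \<psi> norm_character[OF \<eta>])
  ultimately obtain a :: int where "\<forall>s\<in>\<beta> ` L. \<psi> s = s powi a"
    using continuous_circle_subgroup_hom_eq_power_int[OF _ circle_subgroup_character_image[OF \<beta> L]]
    by blast
  then show ?thesis using \<psi> by auto
qed

lemma character_eq_prod_power_int:
  fixes F :: "('g::{topological_group_add, ab_group_add} \<Rightarrow> complex) set"
  assumes compact: "compact (UNIV :: 'g set)" and "finite F" and "\<forall>\<gamma>\<in>F. character \<gamma>"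
    and "character \<eta>" and "\<forall>x\<in>common_kernel F. \<eta> x = 1"
  shows "\<exists>m. \<forall>x. \<eta> x = (\<Prod>\<gamma>\<in>F. \<gamma> x powi m \<gamma>)"
  using assms(2-)
proof (induction F arbitrary: \<eta> rule: finite_induct)
  case empty
  then show ?case by (simp add: common_kernel_def)
next
  case (insert \<beta> F)
  have F: "\<forall>\<gamma>\<in>F. character \<gamma>" and \<beta>: "character \<beta>" using insert.prems by auto
  have "\<eta> x = 1" if "x \<in> common_kernel F" "\<beta> x = 1" for x
    using insert.prems(3) that by (simp add: common_kernel_def)
  then obtain a :: int where a: "\<forall>x\<in>common_kernel F. \<eta> x = \<beta> x powi a"
    using character_eq_power_int_on_subgroup[OF compact closed_common_kernel[OF F]
        add_subgroup_common_kernel[OF F] \<beta> insert.prems(2)] by blast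
  define \<eta>' where "\<eta>' x = \<eta> x * \<beta> x powi (- a)" for x
  have "character \<eta>'" unfolding \<eta>'_def by (intro character_mult character_power_int insert.prems \<beta>)
  moreover have "\<forall>x\<in>common_kernel F. \<eta>' x = 1"
    using a unfolding \<eta>'_def by (simp add: power_int_minus character_nonzero[OF \<beta>])
  ultimately obtain m where m: "\<forall>x. \<eta>' x = (\<Prod>\<gamma>\<in>F. \<gamma> x powi m \<gamma>)" using insert.IH[OF F] by blast
  have "\<eta> x = (\<Prod>\<gamma>\<in>insert \<beta> F. \<gamma> x powi (m(\<beta> := a)) \<gamma>)" for x
  proof -
    have "(\<Prod>\<gamma>\<in>F. \<gamma> x powi (m(\<beta> := a)) \<gamma>) = (\<Prod>\<gamma>\<in>F. \<gamma> x powi m \<gamma>)"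
      using insert.hyps(2) by (intro prod.cong) auto
    moreover have "\<eta> x = \<eta>' x * \<beta> x powi a"
      unfolding \<eta>'_def using character_nonzero[OF \<beta>] by (simp add: power_int_minus)
    ultimately show ?thesis using insert.hyps m by (simp add: mult.commute)
  qed
  then show ?case by blast
qed

lemma independent_chars_power_in_span_trivial:
  assumes ind: "independent_chars E" and F: "finite F" "insert \<beta> F \<subseteq> E" "\<beta> \<notin> F"
    and \<beta>: "character \<beta>" and span: "\<forall>x. \<beta> x powi k = (\<Prod>\<gamma>\<in>F. \<gamma> x powi m \<gamma>)"
  shows "\<beta> x powi k = 1"
proof -
  define m' where "m' = (\<lambda>\<gamma>. - m \<gamma>)(\<beta> := k)"
  have "(\<Prod>\<gamma>\<in>insert \<beta> F. \<gamma> y powi m' \<gamma>) = 1" for y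
  proof -
    have "(\<Prod>\<gamma>\<in>F. \<gamma> y powi m' \<gamma>) = (\<Prod>\<gamma>\<in>F. inverse (\<gamma> y powi m \<gamma>))"
      using F(3) unfolding m'_def by (intro prod.cong) (auto simp: power_int_minus)
    also have "\<dots> = inverse (\<beta> y powi k)"
      using prod_inversef[of "\<lambda>\<gamma>. \<gamma> y powi m \<gamma>" F] span by (simp add: o_def)
    finally show ?thesis using F character_nonzero[OF \<beta>] by (simp add: m'_def)
  qed
  then have "\<forall>\<gamma>\<in>insert \<beta> F. \<forall>y. \<gamma> y powi m' \<gamma> = 1"
    using ind F unfolding independent_chars_def by blast
  then show ?thesis by (simp add: m'_def)
qed

lemma range_character_subset_image_common_kernel:
  fixes E :: "('g::{topological_group_add, ab_group_add} \<Rightarrow> complex) set"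
  assumes compact: "compact (UNIV :: 'g set)" and chars: "\<forall>\<gamma>\<in>E. character \<gamma>"
    and ind: "independent_chars E" and F: "finite F" "insert \<beta> F \<subseteq> E" "\<beta> \<notin> F"
  shows "range \<beta> \<subseteq> \<beta> ` common_kernel F"
proof -
  have F_chars: "\<forall>\<gamma>\<in>F. character \<gamma>" and \<beta>: "character \<beta>" using F chars by auto
  let ?S = "\<beta> ` common_kernel F"
  have "closed ?S"
    by (rule compact_imp_closed[OF compact_character_image[OF compact closed_common_kernel[OF F_chars] \<beta>]])
  moreover have "circle_subgroup ?S"
    by (rule circle_subgroup_character_image[OF \<beta> add_subgroup_common_kernel[OF F_chars]])
  ultimately consider "?S = sphere 0 1" | n where "n > 0" "?S = roots_unity n"
    using closed_circle_subgroup_cases by blast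
  then show ?thesis
  proof cases
    case 1
    then show ?thesis using norm_character[OF \<beta>] by auto
  next
    case 2
    then have "\<forall>x\<in>common_kernel F. \<beta> x powi int n = 1"
      by (auto simp: roots_unity_def power_int_of_nat)
    then obtain m where "\<forall>x. \<beta> x powi int n = (\<Prod>\<gamma>\<in>F. \<gamma> x powi m \<gamma>)"
      using character_eq_prod_power_int[OF compact F(1) F_chars character_power_int[OF \<beta>]] by blast
    then have "\<beta> x powi int n = 1" for x by (rule independent_chars_power_in_span_trivial[OF ind F \<beta>])
    then have "\<beta> x ^ n = 1" for x by (simp add: power_int_of_nat)
    then show ?thesis using 2 by (auto simp: roots_unity_def)
  qed
qed

lemma independent_chars_interpolate_finite:
  fixes E :: "('g::{topological_group_add, ab_group_add} \<Rightarrow> complex) set"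
  assumes compact: "compact (UNIV :: 'g set)" and chars: "\<forall>\<gamma>\<in>E. character \<gamma>"
    and ind: "independent_chars E" and "finite F" "F \<subseteq> E" "\<forall>\<gamma>\<in>F. t \<gamma> \<in> range \<gamma>"
  shows "\<exists>x. \<forall>\<gamma>\<in>F. \<gamma> x = t \<gamma>"
  using assms(4-)
proof (induction F rule: finite_induct)
  case empty
  then show ?case by simp
next
  case (insert \<beta> F)
  have \<beta>: "character \<beta>" using insert.prems chars by auto
  obtain x0 where x0: "\<forall>\<gamma>\<in>F. \<gamma> x0 = t \<gamma>" using insert by auto
  obtain x1 where "t \<beta> = \<beta> x1" using insert.prems by auto
  then have "t \<beta> / \<beta> x0 \<in> range \<beta>" by (metis character_diff[OF \<beta>] rangeI)
  also have "range \<beta> \<subseteq> \<beta> ` common_kernel F"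
    using range_character_subset_image_common_kernel[OF compact chars ind] insert by simp
  finally obtain y where y: "y \<in> common_kernel F" "\<beta> y = t \<beta> / \<beta> x0" by auto
  have "\<gamma> (x0 + y) = t \<gamma>" if "\<gamma> \<in> insert \<beta> F" for \<gamma>
  proof (cases "\<gamma> = \<beta>")
    case True
    then show ?thesis using y character_add[OF \<beta>] character_nonzero[OF \<beta>] by simp
  next
    case False
    then have "\<gamma> \<in> F" "character \<gamma>" using that insert.prems chars by auto
    then show ?thesis using x0 y(1) by (simp add: character_add common_kernel_def)
  qed
  then show ?case by blast
qed

lemma independent_chars_interpolate:
  fixes E :: "('g::{topological_group_add, ab_group_add} \<Rightarrow> complex) set"
  assumes compact: "compact (UNIV :: 'g set)" and chars: "\<forall>\<gamma>\<in>E. character \<gamma>"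
    and ind: "independent_chars E" and targets: "\<forall>\<gamma>\<in>E. t \<gamma> \<in> range \<gamma>"
  shows "\<exists>x. \<forall>\<gamma>\<in>E. \<gamma> x = t \<gamma>"
proof -
  define C where "C \<gamma> = {x. \<gamma> x = t \<gamma>}" for \<gamma>
  have "UNIV \<inter> \<Inter>(C ` E) \<noteq> {}"
  proof (rule compact_imp_fip[OF compact])
    show "closed T" if "T \<in> C ` E" for T
      using that chars unfolding C_def
      by (auto intro!: closed_Collect_eq continuous_on_character continuous_on_const)
    show "UNIV \<inter> \<Inter>C' \<noteq> {}" if C': "finite C'" "C' \<subseteq> C ` E" for C'
    proof -
      obtain F where F: "F \<subseteq> E" "finite F" "C' = C ` F" using finite_subset_image[OF C'] by blast
      then obtain x where "\<forall>\<gamma>\<in>F. \<gamma> x = t \<gamma>"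
        using independent_chars_interpolate_finite[OF compact chars ind F(2,1)] targets by blast
      then show ?thesis unfolding F(3) C_def by auto
    qed
  qed
  then show ?thesis unfolding C_def by auto
qed

theorem corollary2p3:
  fixes E :: "('g::{topological_group_add, ab_group_add, t2_space} \<Rightarrow> complex) set"
    and N :: nat
  assumes "compact (UNIV :: 'g set)"
    and "\<forall>\<gamma>\<in>E. character \<gamma>"
    and "independent_chars E"
    and "\<forall>\<gamma>\<in>E. roots_unity N \<subseteq> range \<gamma>"
  shows "N_PR N E"
  unfolding N_PR_def
proof (intro allI impI)
  fix \<phi> :: "('g \<Rightarrow> complex) \<Rightarrow> complex"
  assume "\<forall>\<gamma>\<in>E. \<phi> \<gamma> \<in> roots_unity N"
  then have "\<forall>\<gamma>\<in>E. \<phi> \<gamma> \<in> range \<gamma>" using assms(4) by blast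
  then show "\<exists>x. \<forall>\<gamma>\<in>E. \<phi> \<gamma> = \<gamma> x"
    using independent_chars_interpolate[OF assms(1-3)] by (metis (full_types))
qed

end
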